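(* Let $d\ge1$ and $\alpha>1$. For every $\zeta>0$ there exist $\theta>0$ and $N=N(\theta)\in\mathbb{N}$ such that for every $n>N$, every $s\in\{1,\dots,n\}$, every $n$-path $\gamma$ and every configuration $\omega'\subset\mathbb{N}\times\mathbb{R}^d$ having the $\theta$-property (with respect to $n$), at least one of the following holds: (i) $\max\{\Delta\gamma(s),\Delta\gamma(s+1)\}\le n^{\zeta}$; (ii) there exist an $n$-path $\gamma'$ and an integer $k>0$ such that $\gamma(i)=\gamma'(i)$ for all $i\notin[s,s+k-1]$, $(i,\gamma'(i))\in\omega'$ for all $i\in[s,s+k-1]$, and \[T_n(\gamma')+(k+1)n^{\theta}\le T_n(\gamma).\]
   Context: An $n$-path is a map $\gamma:\{1,\dots,n\}\to\mathbb{R}^d$; we write $\gamma(k)$ for its $k$-th point and use the convention $\gamma(0)=0$. For $x\in\mathbb{R}^d$, $|x|_1=\sum_i|x_i|$, and $\Delta\gamma(k)=|\gamma(k)-\gamma(k-1)|_1$. The passage time of an $n$-path is $T_n(\gamma)=\sum_{i=1}^n\Delta\gamma(i)^\alpha$. A configuration $\omega\subset\mathbb{N}\times\mathbb{R}^d$ has the $\theta$-property (for given $n$) if $\omega\cap(\{i\}\times(x+[0,n^\theta)^d))\neq\emptyset$ for every $i\in\mathbb{N}$ and every $x\in\mathbb{Z}^d$. *)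

theory Defs
  imports "HOL-Analysis.Analysis"
begin

text \<open>Points of R^d are represented as vectors of type real^'d (d = CARD('d) \<ge> 1).
An n-path is represented by a function nat \<Rightarrow> real^'d of which only the values
at 1..n matter; the convention gamma(0) = 0 is built into path_pt.\<close>

definition l1norm :: "real^'d \<Rightarrow> real" where
  "l1norm x = (\<Sum>j\<in>UNIV. \<bar>x $ j\<bar>)"

definition path_pt :: "(nat \<Rightarrow> real^'d) \<Rightarrow> nat \<Rightarrow> real^'d" where
  "path_pt \<gamma> k = (if k = 0 then 0 else \<gamma> k)"

definition Delta :: "(nat \<Rightarrow> real^'d) \<Rightarrow> nat \<Rightarrow> real" where
  "Delta \<gamma> k = l1norm (path_pt \<gamma> k - path_pt \<gamma> (k - 1))"

definition passage_time :: "real \<Rightarrow> nat \<Rightarrow> (nat \<Rightarrow> real^'d) \<Rightarrow> real" where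
  "passage_time \<alpha> n \<gamma> = (\<Sum>i=1..n. Delta \<gamma> i powr \<alpha>)"

definition theta_property :: "real \<Rightarrow> nat \<Rightarrow> (nat \<times> (real^'d)) set \<Rightarrow> bool" where
  "theta_property \<theta> n \<omega> \<longleftrightarrow>
     (\<forall>i::nat. i \<ge> 1 \<longrightarrow> (\<forall>x::real^'d. (\<forall>j. x $ j \<in> \<int>) \<longrightarrow>
        (\<exists>y. (\<forall>j. x $ j \<le> y $ j \<and> y $ j < x $ j + real n powr \<theta>) \<and> (i, y) \<in> \<omega>)))"

end

theory Submission
  imports Defs "HOL-Library.Log_Nat"
begin

text \<open>Suppose (ii) fails at \<open>s\<close>. Rerouting a window of \<open>W \<ge> 2\<close> steps through \<open>\<omega>'\<close> along the
  straight segment between its endpoints costs at most \<open>W (mean step + 2 d n powr \<theta>) powr \<alpha>\<close>,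
  so no window is much more expensive than that; likewise, stalling next to \<open>\<gamma>(s - 1)\<close> until
  the end shows that the whole tail is cheap. By strict convexity of \<open>x powr \<alpha>\<close>, in such a window
  the second half must carry at least the fraction \<open>g powr \<alpha>\<close> of the energy of the first half.
  Hence, if one of the first two steps exceeds \<open>n powr \<zeta>\<close>, the energy of the first \<open>2 ^ (j + 1)\<close>
  steps grows like \<open>(1 + g powr \<alpha>) ^ j\<close>, which is incompatible with the cheap tail once
  \<open>\<theta> = \<zeta> / 4\<close> and \<open>(1 + g powr \<alpha>) / 2 = 2 powr - r\<close> with \<open>r\<close> small.\<close>

lemma convex_on_powr_nonneg:
  assumes "(p::real) \<ge> 1" shows "convex_on {0..} (\<lambda>x::real. x powr p)"
proof (rule convex_onI)
  fix t x y :: real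
  assume t: "0 < t" "t < 1" and x: "x \<in> {0..}" and y: "y \<in> {0..}"
  show "((1 - t) *\<^sub>R x + t *\<^sub>R y) powr p \<le> (1 - t) * x powr p + t * y powr p"
  proof (cases "x > 0 \<and> y > 0")
    case True
    then show ?thesis using convex_onD[OF powr_convex[OF assms], of t x y] t by auto
  next
    case False
    have "(u * z) powr p \<le> u * z powr p" if "0 \<le> u" "u \<le> 1" "0 \<le> z" for u z
    proof -
      have "(u * z) powr p = u powr p * z powr p" using that by (simp add: powr_mult)
      also have "\<dots> \<le> u * z powr p"
        using that assms by (cases "u = 0") (auto intro!: mult_right_mono powr_le_one_le)
      finally show ?thesis .
    qed
    then show ?thesis using False x y t by (cases "x = 0") auto
  qed
qed simp

lemma powr_mean_le_mean_powr:
  fixes x :: "'a \<Rightarrow> real"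
  assumes "finite I" "I \<noteq> {}" "\<And>i. i \<in> I \<Longrightarrow> x i \<ge> 0" "p \<ge> 1"
  shows "((\<Sum>i\<in>I. x i) / card I) powr p \<le> (\<Sum>i\<in>I. x i powr p) / card I"
proof -
  have "card I > 0" using assms by (simp add: card_gt_0_iff)
  then have "(\<lambda>x. x powr p) (\<Sum>i\<in>I. (1 / card I) *\<^sub>R x i) \<le> (\<Sum>i\<in>I. (1 / card I) * x i powr p)"
    using assms by (intro convex_on_sum[OF assms(1,2) convex_on_powr_nonneg]) auto
  then show ?thesis by (simp add: sum_divide_distrib[symmetric] sum_distrib_left[symmetric])
qed

lemma mean_le_root_mean_powr:
  fixes x :: "'a \<Rightarrow> real"
  assumes "finite I" "I \<noteq> {}" "\<And>i. i \<in> I \<Longrightarrow> x i \<ge> 0" "p \<ge> 1"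
  shows "(\<Sum>i\<in>I. x i) / card I \<le> ((\<Sum>i\<in>I. x i powr p) / card I) powr (1 / p)"
proof -
  have "(\<Sum>i\<in>I. x i) \<ge> 0" using assms by (simp add: sum_nonneg)
  then have "(\<Sum>i\<in>I. x i) / card I = (((\<Sum>i\<in>I. x i) / card I) powr p) powr (1 / p)"
    using assms by (simp add: powr_powr)
  also have "\<dots> \<le> ((\<Sum>i\<in>I. x i powr p) / card I) powr (1 / p)"
    using assms by (intro powr_mono2 powr_mean_le_mean_powr) auto
  finally show ?thesis .
qed

lemma powr_mean_value:
  fixes a b p :: real
  assumes "0 \<le> a" "a < b" "p > 0"
  shows "\<exists>z. a < z \<and> z < b \<and> b powr p - a powr p = (b - a) * (p * z powr (p - 1))"
proof -
  have "\<exists>l z. a < z \<and> z < b \<and> DERIV (\<lambda>x. x powr p) z :> l \<and> b powr p - a powr p = (b - a) * l"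
    using assms by (intro MVT continuous_on_powr')
      (auto intro!: continuous_intros simp: real_differentiable_def intro!: exI has_real_derivative_powr)
  then obtain l z where "a < z" "z < b" "DERIV (\<lambda>x. x powr p) z :> l" "b powr p - a powr p = (b - a) * l"
    by blast
  moreover have "l = p * z powr (p - 1)"
    using DERIV_unique[OF \<open>DERIV _ z :> l\<close> has_real_derivative_powr] assms \<open>a < z\<close> by auto
  ultimately show ?thesis by blast
qed

lemma powr_increment_le:
  fixes y e p :: real
  assumes "y > 0" "e \<ge> 0" "p \<ge> 1"
  shows "(y + e) powr p - y powr p \<le> e * p * (y + e) powr (p - 1)"
proof (cases "e = 0")
  case False
  then have "y < y + e" using assms by simp
  then obtain z where z: "y < z" "z < y + e"
    and mvt: "(y + e) powr p - y powr p = e * (p * z powr (p - 1))"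
    using powr_mean_value[of y "y + e" p] assms by auto
  have "z powr (p - 1) \<le> (y + e) powr (p - 1)"
    using z assms by (intro powr_mono2) auto
  then show ?thesis using mvt assms by (simp add: mult_left_mono mult.assoc)
qed simp

definition powr_midpoint_gap :: "real \<Rightarrow> real \<Rightarrow> real" where
  "powr_midpoint_gap p t = (1 + t powr p) / 2 - ((1 + t) / 2) powr p"

text \<open>Strict convexity of \<open>x powr p\<close> on \<open>[t, 1]\<close>: by the mean value theorem the two halves
  of the chord are crossed with slopes \<open>p z\<^sub>2 powr (p - 1) < p z\<^sub>1 powr (p - 1)\<close>.\<close>

lemma powr_midpoint_gap_pos:
  fixes p t :: real
  assumes "p > 1" "0 \<le> t" "t < 1"
  shows "powr_midpoint_gap p t > 0"
proof -
  define u where "u = (1 + t) / 2"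
  have tu: "t < u" "u < 1" "1 - u = u - t" using assms by (auto simp: u_def field_simps)
  obtain z1 where z1: "u < z1" "1 powr p - u powr p = (1 - u) * (p * z1 powr (p - 1))"
    using powr_mean_value[of u 1 p] assms tu by auto
  obtain z2 where z2: "t < z2" "z2 < u" "u powr p - t powr p = (u - t) * (p * z2 powr (p - 1))"
    using powr_mean_value[of t u p] assms tu by auto
  have "p * z2 powr (p - 1) < p * z1 powr (p - 1)"
    using z1 z2 assms by (simp add: powr_less_mono2)
  then have "(u - t) * (p * z2 powr (p - 1)) < (1 - u) * (p * z1 powr (p - 1))"
    unfolding tu(3) using tu(1) by (simp add: mult_strict_left_mono)
  then show ?thesis using z1(2) z2(3) by (simp add: powr_midpoint_gap_def u_def[symmetric] field_simps)
qed

lemma powr_midpoint_gap_uniform: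
  assumes "p > 1" "0 \<le> g" "g < 1"
  shows "\<exists>c>0. \<forall>t\<in>{0..g}. c \<le> powr_midpoint_gap p t"
proof -
  have "continuous_on {0..g} (powr_midpoint_gap p)"
    unfolding powr_midpoint_gap_def using assms
    by (intro continuous_intros continuous_on_powr') auto
  then obtain t0 where "t0 \<in> {0..g}" "\<forall>t\<in>{0..g}. powr_midpoint_gap p t0 \<le> powr_midpoint_gap p t"
    using continuous_attains_inf[of "{0..g}" "powr_midpoint_gap p"] assms by auto
  moreover have "powr_midpoint_gap p t0 > 0"
    using powr_midpoint_gap_pos assms calculation by auto
  ultimately show ?thesis by blast
qed

lemma powr_midpoint_gap_homogeneous:
  fixes a b p :: real
  assumes "a > 0" "b \<ge> 0"
  shows "(a powr p + b powr p) / 2 - ((a + b) / 2) powr p = a powr p * powr_midpoint_gap p (b / a)"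
proof -
  define t where "t = b / a"
  have t: "t \<ge> 0" "b = a * t" "(a + b) / 2 = a * ((1 + t) / 2)"
    using assms by (simp_all add: t_def field_simps)
  have "b powr p = a powr p * t powr p" using assms t by (simp add: powr_mult)
  moreover have "((a + b) / 2) powr p = a powr p * ((1 + t) / 2) powr p"
    unfolding t(3) using assms t by (intro powr_mult)
  ultimately
  show ?thesis by (simp add: powr_midpoint_gap_def t_def[symmetric] field_simps)
qed

text \<open>\<open>P\<close>, \<open>P'\<close> are the means of \<open>x powr p\<close> and \<open>G\<close>, \<open>G'\<close> the means of \<open>x\<close> over the two halves
  of a block; \<open>fail\<close> says that equal steps of length (mean + \<open>e\<close>) do not save \<open>\<tau>\<close> per step.
  A lighter second half would let strict convexity gain \<open>c0 * P\<close>, more than \<open>\<tau>\<close> plus the cost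
  of \<open>e\<close>.\<close>

lemma second_half_energy_bound:
  fixes p g c0 Q P P' G G' e \<tau> :: real
  assumes p: "p > 1" and g: "0 \<le> g" "g < 1" and c0: "c0 > 0"
    and gap: "\<And>t. t \<in> {0..g} \<Longrightarrow> c0 \<le> powr_midpoint_gap p t"
    and Q: "Q > 0" "Q \<le> P" and P': "P' \<ge> 0"
    and G: "0 \<le> G" "G \<le> P powr (1 / p)" and G': "0 \<le> G'" "G' \<le> P' powr (1 / p)"
    and e: "e \<ge> 0" "e \<le> Q powr (1 / p)" "e * p * 2 powr p \<le> c0 * Q powr (1 / p)"
    and \<tau>: "2 * \<tau> < c0 * Q"
    and fail: "(P + P') / 2 < ((G + G') / 2 + e) powr p + \<tau>"
  shows "g powr p * P \<le> P'"
proof (rule ccontr)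
  assume "\<not> g powr p * P \<le> P'"
  define a where "a = P powr (1 / p)"
  define b where "b = P' powr (1 / p)"
  define y where "y = (a + b) / 2"
  have a: "a > 0" "a powr p = P" "Q powr (1 / p) \<le> a"
    using Q p by (auto simp: a_def powr_powr powr_mono2)
  have b: "b \<ge> 0" "b powr p = P'" using P' p by (auto simp: b_def powr_powr)
  have "b < g * a"
  proof (rule ccontr)
    assume "\<not> b < g * a"
    then have "(g * a) powr p \<le> b powr p" using p g a by (intro powr_mono2) auto
    then show False using \<open>\<not> g powr p * P \<le> P'\<close> a b g by (simp add: powr_mult)
  qed
  then have "b / a \<in> {0..g}" using a b by (auto simp: divide_simps)
  moreover have "P \<ge> 0" using Q by simp
  ultimately have "c0 * P \<le> P * powr_midpoint_gap p (b / a)"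
    using gap[of "b / a"] by (simp add: mult.commute mult_left_mono)
  then have gain: "c0 * P \<le> (P + P') / 2 - y powr p"
    using powr_midpoint_gap_homogeneous[OF a(1) b(1), of p] a b by (simp add: y_def)
  have "g * a \<le> a" using g a by (simp add: mult_le_cancel_right1)
  then have "b \<le> a" using \<open>b < g * a\<close> by linarith
  then have y: "y \<le> a" "y > 0" using a b by (auto simp: y_def)
  have "((G + G') / 2 + e) powr p \<le> (y + e) powr p"
    using G G' e p by (intro powr_mono2) (auto simp: y_def a_def b_def)
  also have "\<dots> \<le> y powr p + e * p * (y + e) powr (p - 1)"
    using powr_increment_le[of y e p] y e p by simp
  also have "e * p * (y + e) powr (p - 1) \<le> e * p * (2 * a) powr (p - 1)"
    using y e a p by (intro mult_left_mono powr_mono2) auto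
  also have "e * p * (2 * a) powr (p - 1) = (e * p * 2 powr p) * a powr (p - 1) / 2"
    using a by (simp add: powr_mult powr_diff)
  also have "\<dots> \<le> (c0 * a) * a powr (p - 1) / 2"
    using e a c0 by (intro divide_right_mono mult_right_mono) (auto intro: order.trans mult_left_mono)
  also have "\<dots> = c0 * P / 2"
    using a by (simp add: powr_diff)
  finally have cost: "((G + G') / 2 + e) powr p \<le> y powr p + c0 * P / 2" by simp
  have "c0 * Q \<le> c0 * P" using Q c0 by simp
  then show False using gain cost \<tau> fail by linarith
qed

lemma dyadic_energy_lower_bound:
  fixes x :: "nat \<Rightarrow> real" and p g c0 Q e \<tau> m :: real and K :: nat
  assumes x: "\<And>j. x j \<ge> 0" and p: "p > 1" and g: "0 \<le> g" "g < 1" and c0: "c0 > 0"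
    and gap: "\<And>t. t \<in> {0..g} \<Longrightarrow> c0 \<le> powr_midpoint_gap p t"
    and Q: "Q > 0" and e: "e \<ge> 0" "e \<le> Q powr (1 / p)" "e * p * 2 powr p \<le> c0 * Q powr (1 / p)"
    and \<tau>: "2 * \<tau> < c0 * Q"
    and window: "\<And>W. 2 \<le> W \<Longrightarrow> W \<le> K \<Longrightarrow>
      (\<Sum>j<W. x j powr p) < W * ((\<Sum>j<W. x j) / W + e) powr p + W * \<tau>"
    and start: "2 * m \<le> x 0 powr p + x 1 powr p"
    and dyadic: "\<And>j. 2 ^ (j + 1) \<le> K \<Longrightarrow> Q \<le> m * ((1 + g powr p) / 2) ^ j"
  shows "2 ^ (j + 1) \<le> K \<Longrightarrow> 2 ^ (j + 1) * (m * ((1 + g powr p) / 2) ^ j) \<le> (\<Sum>i<2 ^ (j + 1). x i powr p)"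
proof (induction j)
  case 0
  then show ?case using start by (simp add: numeral_2_eq_2)
next
  case (Suc j)
  define \<beta> where "\<beta> = (1 + g powr p) / 2"
  define W :: nat where "W = 2 ^ (j + 1)"
  define A where "A = (\<Sum>i<W. x i powr p)"
  define A' where "A' = (\<Sum>i\<in>{W..<2 * W}. x i powr p)"
  define S where "S = (\<Sum>i<W. x i)"
  define S' where "S' = (\<Sum>i\<in>{W..<2 * W}. x i)"
  have W: "W > 0" "2 * W \<le> K" "2 ^ (Suc j + 1) = 2 * W" using Suc.prems by (auto simp: W_def)
  have split: "(\<Sum>i<2 * W. x i powr p) = A + A'" "(\<Sum>i<2 * W. x i) = S + S'"
    by (simp_all add: A_def A'_def S_def S'_def lessThan_atLeast0 sum.atLeastLessThan_concat)
  have "W * (m * \<beta> ^ j) \<le> A" using Suc W by (simp add: W_def A_def \<beta>_def)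
  then have P: "m * \<beta> ^ j \<le> A / W" using W by (simp add: field_simps)
  have PQ: "Q \<le> A / W" using P dyadic[of j] W by (simp add: W_def \<beta>_def)
  have nonneg: "0 \<le> A' / W" "0 \<le> S / W" "0 \<le> S' / W"
    using x by (simp_all add: A'_def S_def S'_def sum_nonneg)
  have means: "S / W \<le> (A / W) powr (1 / p)" "S' / W \<le> (A' / W) powr (1 / p)"
    using mean_le_root_mean_powr[of "{..<W}" x p] mean_le_root_mean_powr[of "{W..<2 * W}" x p] x p W
    by (auto simp: A_def A'_def S_def S'_def)
  have fail: "(A / W + A' / W) / 2 < ((S / W + S' / W) / 2 + e) powr p + \<tau>"
  proof -
    have "A + A' < 2 * W * (((S + S') / (2 * W) + e) powr p + \<tau>)"
      using window[of "2 * W"] W split by (simp add: distrib_left)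
    moreover have "(A / W + A' / W) / 2 = (A + A') / (2 * W)" "(S / W + S' / W) / 2 = (S + S') / (2 * W)"
      by (simp_all add: add_divide_distrib)
    ultimately show ?thesis using W by (simp only:) (simp add: divide_less_eq mult.commute)
  qed
  have "g powr p * (A / W) \<le> A' / W"
    by (rule second_half_energy_bound[OF p g c0 gap Q(1) PQ nonneg(1,2) means(1) nonneg(3) means(2)
          e \<tau> fail])
  then have "2 * W * \<beta> * (A / W) \<le> A + A'" using W by (simp add: \<beta>_def field_simps)
  moreover have "2 * W * \<beta> * (m * \<beta> ^ j) \<le> 2 * W * \<beta> * (A / W)"
    using P g by (intro mult_left_mono) (auto simp: \<beta>_def)
  ultimately show ?case using W split by (simp add: \<beta>_def W_def mult_ac)
qed

lemma dyadic_bracket: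
  fixes K :: nat
  assumes "2 \<le> K"
  obtains J :: nat where "2 ^ (J + 1) \<le> K" "K < 2 ^ (J + 2)"
proof
  have "2 \<le> floorlog 2 K" using assms by (intro floorlog_geI) auto
  then show "2 ^ (floorlog 2 K - 2 + 1) \<le> K" "K < 2 ^ (floorlog 2 K - 2 + 2)"
    using floorlog_bounds[of K 2] assms by (simp_all add: Suc_diff_Suc numeral_2_eq_2)
qed

text \<open>A step larger than \<open>L\<close> starts the dyadic growth, which pushes the total energy above
  \<open>K * Q / 2\<close>, contradicting \<open>total\<close>.\<close>

lemma first_steps_bounded:
  fixes x :: "nat \<Rightarrow> real" and p g c0 Q e \<tau> L :: real and K :: nat
  assumes x: "\<And>j. x j \<ge> 0" and p: "p > 1" and g: "0 \<le> g" "g < 1" and c0: "c0 > 0"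
    and gap: "\<And>t. t \<in> {0..g} \<Longrightarrow> c0 \<le> powr_midpoint_gap p t"
    and Q: "Q > 0" and e: "e \<ge> 0" "e \<le> Q powr (1 / p)" "e * p * 2 powr p \<le> c0 * Q powr (1 / p)"
    and \<tau>: "\<tau> \<ge> 0" "2 * \<tau> < c0 * Q" and Q_large: "2 * e powr p + 4 * \<tau> \<le> Q"
    and L: "L \<ge> 0" and dyadic: "\<And>j. 2 ^ j \<le> K \<Longrightarrow> Q \<le> L powr p / 2 * ((1 + g powr p) / 2) ^ j"
    and K: "K \<ge> 1"
    and window: "\<And>W. 2 \<le> W \<Longrightarrow> W \<le> K \<Longrightarrow>
      (\<Sum>j<W. x j powr p) < W * ((\<Sum>j<W. x j) / W + e) powr p + W * \<tau>"
    and total: "(\<Sum>j<K. x j powr p) < K * e powr p + (K + 1) * \<tau>"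
  shows "x 0 \<le> L \<and> (2 \<le> K \<longrightarrow> x 1 \<le> L)"
proof (rule ccontr)
  assume "\<not> ?thesis"
  then have large: "x 0 > L \<or> (2 \<le> K \<and> x 1 > L)" by auto
  have powr_large: "L powr p \<le> x j powr p" if "x j > L" for j
    using that L p by (intro powr_mono2) auto
  have "K * Q \<le> 2 * (\<Sum>j<K. x j powr p)"
  proof (cases "K \<ge> 2")
    case False
    then have "K = 1" "x 0 > L" using K large by auto
    then show ?thesis using dyadic[of 0] powr_large[of 0] Q by simp
  next
    case True
    then obtain J where J: "2 ^ (J + 1) \<le> K" "K < 2 ^ (J + 2)" by (rule dyadic_bracket)
    have "L powr p \<le> x 0 powr p + x 1 powr p"
      using large powr_large[of 0] powr_large[of 1] by (smt (verit) powr_ge_zero)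
    then have "2 ^ (J + 1) * (L powr p / 2 * ((1 + g powr p) / 2) ^ J) \<le> (\<Sum>i<2 ^ (J + 1). x i powr p)"
      using J dyadic by (intro dyadic_energy_lower_bound[OF x p g c0 gap Q e \<tau>(2) window]) auto
    moreover have "2 ^ (J + 1) * Q \<le> 2 ^ (J + 1) * (L powr p / 2 * ((1 + g powr p) / 2) ^ J)"
      using J by (intro mult_left_mono dyadic) auto
    moreover have "(\<Sum>i<2 ^ (J + 1). x i powr p) \<le> (\<Sum>j<K. x j powr p)"
      using J by (intro sum_mono2) auto
    ultimately have "2 ^ (J + 1) * Q \<le> (\<Sum>j<K. x j powr p)" by linarith
    moreover have "real K \<le> real (2 * 2 ^ (J + 1))" using J(2) by (simp only: of_nat_le_iff) simp
    then have "K * Q \<le> 2 * (2 ^ (J + 1) * Q)" using Q mult_right_mono[of "real K" _ Q] by simp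
    ultimately show ?thesis by linarith
  qed
  moreover have "K * (2 * e powr p + 4 * \<tau>) \<le> K * Q" using Q_large by (intro mult_left_mono) auto
  moreover have "(K + 1) * \<tau> \<le> 2 * K * \<tau>" using K \<tau> by (intro mult_right_mono) auto
  ultimately show False using total by (simp add: algebra_simps)
qed

lemma l1norm_nonneg: "l1norm x \<ge> 0"
  unfolding l1norm_def by (simp add: sum_nonneg)

lemma l1norm_minus_commute: "l1norm (x - y) = l1norm (y - x)"
  unfolding l1norm_def by (simp add: abs_minus_commute)

lemma l1norm_scaleR: "l1norm (c *\<^sub>R x) = \<bar>c\<bar> * l1norm x"
  unfolding l1norm_def by (simp add: abs_mult sum_distrib_left)

lemma l1norm_diff_triangle: "l1norm (x - z) \<le> l1norm (x - y) + l1norm (y - z)"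
  unfolding l1norm_def by (simp add: sum.distrib[symmetric] sum_mono abs_diff_triangle_ineq)

lemma l1norm_le_card:
  fixes x :: "real^'d"
  assumes "\<And>j. \<bar>x $ j\<bar> \<le> r"
  shows "l1norm x \<le> real CARD('d) * r"
  unfolding l1norm_def using sum_mono[of UNIV "\<lambda>j. \<bar>x $ j\<bar>" "\<lambda>_. r"] assms by simp

lemma l1norm_diff_le_sum_steps:
  fixes f :: "nat \<Rightarrow> real^'d"
  shows "k \<le> m \<Longrightarrow> l1norm (f m - f k) \<le> (\<Sum>i\<in>{k<..m}. l1norm (f i - f (i - 1)))"
proof (induction m)
  case 0
  then show ?case by (simp add: l1norm_def)
next
  case (Suc m)
  show ?case
  proof (cases "k = Suc m")
    case False
    then have "k \<le> m" "{k<..Suc m} = insert (Suc m) {k<..m}" using Suc.prems by auto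
    then show ?thesis
      using Suc.IH l1norm_diff_triangle[of "f (Suc m)" "f k" "f m"] by simp
  qed (simp add: l1norm_def)
qed

lemma sum_atLeastAtMost_shift:
  fixes s W :: nat
  assumes "W \<ge> 1"
  shows "(\<Sum>i\<in>{s..s + W - 1}. f i) = (\<Sum>j<W. f (s + j))"
proof -
  have "{s..s + W - 1} = {s..<s + W}" using assms by auto
  then show ?thesis by (simp add: sum.atLeastLessThan_shift_0[of _ s] lessThan_atLeast0)
qed

lemma theta_property_near:
  fixes \<omega> :: "(nat \<times> (real^'d)) set"
  assumes "theta_property \<theta> n \<omega>" "i \<ge> 1" "1 \<le> real n powr \<theta>"
  shows "\<exists>y. (i, y) \<in> \<omega> \<and> l1norm (y - q) \<le> real CARD('d) * real n powr \<theta>"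
proof -
  define x :: "real^'d" where "x = (\<chi> j. of_int \<lfloor>q $ j\<rfloor>)"
  have "\<forall>j. x $ j \<in> \<int>" by (simp add: x_def)
  then obtain y where y: "\<forall>j. x $ j \<le> y $ j \<and> y $ j < x $ j + real n powr \<theta>" "(i, y) \<in> \<omega>"
    using assms(1,2) unfolding theta_property_def by blast
  have "\<bar>(y - q) $ j\<bar> \<le> real n powr \<theta>" for j
  proof -
    have "x $ j \<le> q $ j" "q $ j < x $ j + 1" unfolding x_def by (simp_all add: of_int_floor_le)
    then show ?thesis using y(1)[rule_format, of j] assms(3) by auto
  qed
  then have "l1norm (y - q) \<le> real CARD('d) * real n powr \<theta>" by (rule l1norm_le_card)
  then show ?thesis using y(2) by blast
qed

definition reroutable :: "real \<Rightarrow> real \<Rightarrow> nat \<Rightarrow> nat \<Rightarrow> (nat \<Rightarrow> real^'d) \<Rightarrow> (nat \<times> (real^'d)) set \<Rightarrow> bool" where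
  "reroutable \<alpha> \<theta> n s \<gamma> \<omega> \<longleftrightarrow> (\<exists>\<gamma>'::nat \<Rightarrow> real^'d. \<exists>k::nat. k > 0 \<and> s + k - 1 \<le> n \<and>
     (\<forall>i\<in>{1..n}. (i < s \<or> i > s + k - 1) \<longrightarrow> \<gamma> i = \<gamma>' i) \<and>
     (\<forall>i\<in>{s..s + k - 1}. (i, \<gamma>' i) \<in> \<omega>) \<and>
     passage_time \<alpha> n \<gamma>' + real (k + 1) * real n powr \<theta> \<le> passage_time \<alpha> n \<gamma>)"

lemma exists_detour_near:
  fixes \<gamma> q :: "nat \<Rightarrow> real^'d" and \<omega> :: "(nat \<times> (real^'d)) set"
  assumes "theta_property \<theta> n \<omega>" "1 \<le> real n powr \<theta>" "s \<ge> 1"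
  obtains \<gamma>' where "\<And>i. i < s \<or> i > t \<Longrightarrow> \<gamma>' i = \<gamma> i"
    and "\<And>i. i \<in> {s..t} \<Longrightarrow> (i, \<gamma>' i) \<in> \<omega> \<and> l1norm (\<gamma>' i - q i) \<le> real CARD('d) * real n powr \<theta>"
proof -
  define near where "near i y \<longleftrightarrow> (i, y) \<in> \<omega> \<and> l1norm (y - q i) \<le> real CARD('d) * real n powr \<theta>" for i y
  have pick: "near i (SOME y. near i y)" if "i \<ge> s" for i
  proof (rule someI_ex)
    have "i \<ge> 1" using that assms(3) by simp
    then show "\<exists>y. near i y" unfolding near_def by (rule theta_property_near[OF assms(1) _ assms(2)])
  qed
  define \<gamma>' where "\<gamma>' i = (if s \<le> i \<and> i \<le> t then SOME y. near i y else \<gamma> i)" for i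
  show ?thesis
  proof (rule that[of \<gamma>'])
    show "\<gamma>' i = \<gamma> i" if "i < s \<or> i > t" for i using that by (auto simp: \<gamma>'_def)
    show "(i, \<gamma>' i) \<in> \<omega> \<and> l1norm (\<gamma>' i - q i) \<le> real CARD('d) * real n powr \<theta>"
      if "i \<in> {s..t}" for i
      using pick[of i] that unfolding near_def \<gamma>'_def by auto
  qed
qed

lemma Delta_eq_outside:
  assumes "\<And>i. i < s \<or> i > t \<Longrightarrow> \<gamma>' i = \<gamma> i" "i < s \<or> i > t + 1"
  shows "Delta \<gamma>' i = Delta \<gamma> i"
proof -
  have "\<gamma>' i = \<gamma> i" "\<gamma>' (i - 1) = \<gamma> (i - 1)"
    by (rule assms(1); use assms(2) in linarith)+
  then show ?thesis by (simp add: Delta_def path_pt_def)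
qed

lemma passage_time_diff_local:
  assumes "\<And>i. i < s \<or> i > t \<Longrightarrow> \<gamma>' i = \<gamma> i" "s \<ge> 1"
  shows "passage_time \<alpha> n \<gamma> - passage_time \<alpha> n \<gamma>' =
    (\<Sum>i\<in>{s..min (t + 1) n}. Delta \<gamma> i powr \<alpha> - Delta \<gamma>' i powr \<alpha>)"
proof -
  have "passage_time \<alpha> n \<gamma> - passage_time \<alpha> n \<gamma>' = (\<Sum>i=1..n. Delta \<gamma> i powr \<alpha> - Delta \<gamma>' i powr \<alpha>)"
    unfolding passage_time_def by (simp add: sum_subtractf)
  also have "\<dots> = (\<Sum>i\<in>{s..min (t + 1) n}. Delta \<gamma> i powr \<alpha> - Delta \<gamma>' i powr \<alpha>)"
  proof (rule sum.mono_neutral_right)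
    show "\<forall>i\<in>{1..n} - {s..min (t + 1) n}. Delta \<gamma> i powr \<alpha> - Delta \<gamma>' i powr \<alpha> = 0"
      using Delta_eq_outside[OF assms(1)] by force
  qed (use assms(2) in auto)
  finally show ?thesis .
qed

lemma Delta_le_guide:
  assumes "l1norm (path_pt \<gamma> i - q i) \<le> r" "l1norm (path_pt \<gamma> (i - 1) - q (i - 1)) \<le> r"
  shows "Delta \<gamma> i \<le> l1norm (q i - q (i - 1)) + 2 * r"
proof -
  have "Delta \<gamma> i \<le> l1norm (path_pt \<gamma> i - q i) + l1norm (q i - path_pt \<gamma> (i - 1))"
    unfolding Delta_def by (rule l1norm_diff_triangle)
  also have "l1norm (q i - path_pt \<gamma> (i - 1)) \<le> l1norm (q i - q (i - 1)) + l1norm (q (i - 1) - path_pt \<gamma> (i - 1))"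
    by (rule l1norm_diff_triangle)
  finally show ?thesis using assms l1norm_minus_commute[of "q (i - 1)"] by simp
qed

text \<open>The detour visits points of \<open>\<omega>\<close> next to a guide \<open>q\<close> that starts and ends on the path,
  so every affected step is at most \<open>B\<close>.\<close>

lemma detour_saving:
  fixes \<gamma> q :: "nat \<Rightarrow> real^'d" and \<omega> :: "(nat \<times> (real^'d)) set"
  assumes \<omega>: "theta_property \<theta> n \<omega>" "1 \<le> real n powr \<theta>" and st: "1 \<le> s" "s \<le> t" "t \<le> n"
    and \<alpha>: "\<alpha> > 0"
    and q_start: "q (s - 1) = path_pt \<gamma> (s - 1)"
    and q_end: "t + 1 \<le> n \<Longrightarrow> q (t + 1) = path_pt \<gamma> (t + 1)"
    and B: "\<And>i. i \<in> {s..min (t + 1) n} \<Longrightarrow>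
       l1norm (q i - q (i - 1)) + 2 * real CARD('d) * real n powr \<theta> \<le> B"
  obtains \<gamma>' where "\<And>i. i < s \<or> i > t \<Longrightarrow> \<gamma>' i = \<gamma> i" "\<And>i. i \<in> {s..t} \<Longrightarrow> (i, \<gamma>' i) \<in> \<omega>"
    and "(\<Sum>i\<in>{s..min (t + 1) n}. Delta \<gamma> i powr \<alpha>) - card {s..min (t + 1) n} * B powr \<alpha>
      \<le> passage_time \<alpha> n \<gamma> - passage_time \<alpha> n \<gamma>'"
proof -
  define r where "r = real CARD('d) * real n powr \<theta>"
  obtain \<gamma>' where outside: "\<And>i. i < s \<or> i > t \<Longrightarrow> \<gamma>' i = \<gamma> i"
    and inside: "\<And>i. i \<in> {s..t} \<Longrightarrow> (i, \<gamma>' i) \<in> \<omega> \<and> l1norm (\<gamma>' i - q i) \<le> r"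
    using exists_detour_near[OF \<omega> st(1), where t = t and \<gamma> = \<gamma> and q = q] unfolding r_def by blast
  have near: "l1norm (path_pt \<gamma>' i - q i) \<le> r" if i: "i \<in> {s - 1..min (t + 1) n}" for i
  proof -
    have "i \<in> {s..t} \<or> i = s - 1 \<or> (i = t + 1 \<and> t + 1 \<le> n)" using i st by auto
    then consider "i \<in> {s..t}" | "i = s - 1" | "i = t + 1" "t + 1 \<le> n" by blast
    then show ?thesis
    proof cases
      case 1
      then show ?thesis using inside st by (simp add: path_pt_def)
    next
      case 2
      then have "path_pt \<gamma>' i = path_pt \<gamma> i" using outside[of i] st by (simp add: path_pt_def)
      then show ?thesis using 2 q_start by (simp add: l1norm_def r_def)
    next
      case 3
      then have "path_pt \<gamma>' i = path_pt \<gamma> i" using outside[of i] by (simp add: path_pt_def)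
      then show ?thesis using 3 q_end by (simp add: l1norm_def r_def)
    qed
  qed
  have "Delta \<gamma>' i \<le> B" if i: "i \<in> {s..min (t + 1) n}" for i
  proof -
    have "Delta \<gamma>' i \<le> l1norm (q i - q (i - 1)) + 2 * r"
      by (rule Delta_le_guide; rule near) (use i in auto)
    then show ?thesis using B[OF i] by (simp add: r_def)
  qed
  then have "(\<Sum>i\<in>{s..min (t + 1) n}. Delta \<gamma>' i powr \<alpha>) \<le> (\<Sum>i\<in>{s..min (t + 1) n}. B powr \<alpha>)"
    using \<alpha> by (intro sum_mono powr_mono2) (auto simp: Delta_def l1norm_nonneg)
  moreover have "passage_time \<alpha> n \<gamma> - passage_time \<alpha> n \<gamma>' =
      (\<Sum>i\<in>{s..min (t + 1) n}. Delta \<gamma> i powr \<alpha>) - (\<Sum>i\<in>{s..min (t + 1) n}. Delta \<gamma>' i powr \<alpha>)"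
    using passage_time_diff_local[OF outside st(1)] by (simp add: sum_subtractf)
  ultimately have saving: "(\<Sum>i\<in>{s..min (t + 1) n}. Delta \<gamma> i powr \<alpha>) - card {s..min (t + 1) n} * B powr \<alpha>
      \<le> passage_time \<alpha> n \<gamma> - passage_time \<alpha> n \<gamma>'"
    by simp
  show ?thesis
  proof (rule that[OF outside _ saving])
    show "(i, \<gamma>' i) \<in> \<omega>" if "i \<in> {s..t}" for i using inside[OF that] by blast
  qed
qed

text \<open>The detour through \<open>\<omega>\<close> along the straight segment from \<open>\<gamma>(s - 1)\<close> to \<open>\<gamma>(s + W - 1)\<close>,
  cut into \<open>W\<close> equal pieces: each of its steps is at most the mean step plus \<open>2 d n powr \<theta>\<close>.\<close>

lemma straight_detour:
  fixes \<gamma> :: "nat \<Rightarrow> real^'d" and \<omega> :: "(nat \<times> (real^'d)) set"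
  assumes \<omega>: "theta_property \<theta> n \<omega>" "1 \<le> real n powr \<theta>" and s: "s \<ge> 1" and \<alpha>: "\<alpha> > 0"
    and W: "2 \<le> W" "s + W - 1 \<le> n"
    and costly: "W * ((\<Sum>j<W. Delta \<gamma> (s + j)) / W + 2 * real CARD('d) * real n powr \<theta>) powr \<alpha>
      + W * real n powr \<theta> \<le> (\<Sum>j<W. Delta \<gamma> (s + j) powr \<alpha>)"
  shows "reroutable \<alpha> \<theta> n s \<gamma> \<omega>"
proof -
  define a where "a = path_pt \<gamma> (s - 1)"
  define b where "b = path_pt \<gamma> (s + W - 1)"
  define q where "q i = a + ((real i - real (s - 1)) / W) *\<^sub>R (b - a)" for i
  define t where "t = s + W - 2"
  define B where "B = l1norm (b - a) / W + 2 * real CARD('d) * real n powr \<theta>"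
  have Wpos: "real W > 0" using W by simp
  have t: "t + 1 = s + W - 1" "s \<le> t" "t \<le> n" "min (t + 1) n = s + W - 1" using W by (auto simp: t_def)
  have q_end: "q (t + 1) = path_pt \<gamma> (t + 1)"
  proof -
    have "real (s + W - 1) - real (s - 1) = real W" using s W by (simp add: of_nat_diff)
    then have "q (s + W - 1) = b" using Wpos by (simp add: q_def)
    then show ?thesis unfolding t(1) b_def .
  qed
  have q_start: "q (s - 1) = path_pt \<gamma> (s - 1)" by (simp add: q_def a_def)
  have B: "l1norm (q i - q (i - 1)) + 2 * real CARD('d) * real n powr \<theta> \<le> B"
    if "i \<in> {s..min (t + 1) n}" for i
  proof -
    have "real i - real (s - 1) - (real (i - 1) - real (s - 1)) = 1" using that s by (simp add: of_nat_diff)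
    then have "q i - q (i - 1) = (1 / W) *\<^sub>R (b - a)"
      unfolding q_def by (simp add: scaleR_diff_left[symmetric] diff_divide_distrib[symmetric])
    then show ?thesis using Wpos by (simp add: B_def l1norm_scaleR)
  qed
  obtain \<gamma>' where outside: "\<And>i. i < s \<or> i > t \<Longrightarrow> \<gamma>' i = \<gamma> i"
    and inside: "\<And>i. i \<in> {s..t} \<Longrightarrow> (i, \<gamma>' i) \<in> \<omega>"
    and saving: "(\<Sum>i\<in>{s..min (t + 1) n}. Delta \<gamma> i powr \<alpha>) - card {s..min (t + 1) n} * B powr \<alpha>
      \<le> passage_time \<alpha> n \<gamma> - passage_time \<alpha> n \<gamma>'"
    using detour_saving[OF \<omega> s t(2,3) \<alpha> q_start q_end B] by blast
  have sum_eq: "(\<Sum>i\<in>{s..min (t + 1) n}. Delta \<gamma> i powr \<alpha>) = (\<Sum>j<W. Delta \<gamma> (s + j) powr \<alpha>)"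
    unfolding t(4) using W by (intro sum_atLeastAtMost_shift) auto
  have "l1norm (b - a) \<le> (\<Sum>i\<in>{s - 1<..s + W - 1}. l1norm (path_pt \<gamma> i - path_pt \<gamma> (i - 1)))"
    unfolding a_def b_def by (rule l1norm_diff_le_sum_steps) simp
  also have "{s - 1<..s + W - 1} = {s..s + W - 1}" using s by auto
  also have "(\<Sum>i\<in>{s..s + W - 1}. l1norm (path_pt \<gamma> i - path_pt \<gamma> (i - 1))) = (\<Sum>j<W. Delta \<gamma> (s + j))"
    using W by (subst sum_atLeastAtMost_shift) (auto simp: Delta_def)
  finally have "B \<le> (\<Sum>j<W. Delta \<gamma> (s + j)) / W + 2 * real CARD('d) * real n powr \<theta>"
    unfolding B_def using Wpos by (simp add: divide_right_mono)
  then have WB: "W * B powr \<alpha> \<le> W * ((\<Sum>j<W. Delta \<gamma> (s + j)) / W + 2 * real CARD('d) * real n powr \<theta>) powr \<alpha>"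
    using \<alpha> by (intro mult_left_mono powr_mono2) (auto simp: B_def l1norm_nonneg)
  then have "passage_time \<alpha> n \<gamma>' + W * real n powr \<theta> \<le> passage_time \<alpha> n \<gamma>"
  proof -
    have "card {s..min (t + 1) n} = W" using t(4) W by simp
    then show ?thesis using saving costly WB unfolding sum_eq by simp
  qed
  moreover have "s + (W - 1) - 1 = t" "W - 1 + 1 = W" using W by (auto simp: t_def)
  ultimately show ?thesis unfolding reroutable_def using outside inside t W
    by (intro exI[of _ \<gamma>'] exI[of _ "W - 1"]) auto
qed

text \<open>The detour that stays next to \<open>\<gamma>(s - 1)\<close> up to the end of the path: every step
  of it is at most \<open>2 d n powr \<theta>\<close>.\<close>

lemma stalled_detour:
  fixes \<gamma> :: "nat \<Rightarrow> real^'d" and \<omega> :: "(nat \<times> (real^'d)) set"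
  assumes \<omega>: "theta_property \<theta> n \<omega>" "1 \<le> real n powr \<theta>" and s: "1 \<le> s" "s \<le> n" and \<alpha>: "\<alpha> > 0"
    and costly: "real (n - s + 1) * (2 * real CARD('d) * real n powr \<theta>) powr \<alpha>
      + real (n - s + 2) * real n powr \<theta> \<le> (\<Sum>j<n - s + 1. Delta \<gamma> (s + j) powr \<alpha>)"
  shows "reroutable \<alpha> \<theta> n s \<gamma> \<omega>"
proof -
  define B where "B = 2 * real CARD('d) * real n powr \<theta>"
  obtain \<gamma>' where outside: "\<And>i. i < s \<or> i > n \<Longrightarrow> \<gamma>' i = \<gamma> i"
    and inside: "\<And>i. i \<in> {s..n} \<Longrightarrow> (i, \<gamma>' i) \<in> \<omega>"
    and saving: "(\<Sum>i\<in>{s..min (n + 1) n}. Delta \<gamma> i powr \<alpha>) - card {s..min (n + 1) n} * B powr \<alpha>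
      \<le> passage_time \<alpha> n \<gamma> - passage_time \<alpha> n \<gamma>'"
    by (rule detour_saving[OF \<omega> s order_refl \<alpha>, where q = "\<lambda>_. path_pt \<gamma> (s - 1)"])
      (auto simp: B_def l1norm_def)
  have end_eq: "s + (n - s + 1) - 1 = n" using s by simp
  have "(\<Sum>i\<in>{s..min (n + 1) n}. Delta \<gamma> i powr \<alpha>) = (\<Sum>j<n - s + 1. Delta \<gamma> (s + j) powr \<alpha>)"
    using sum_atLeastAtMost_shift[where W = "n - s + 1" and s = s and f = "\<lambda>i. Delta \<gamma> i powr \<alpha>"] end_eq by simp
  then have "passage_time \<alpha> n \<gamma>' + real (n - s + 2) * real n powr \<theta> \<le> passage_time \<alpha> n \<gamma>"
    using saving costly s unfolding B_def by (simp add: Suc_diff_le)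
  then show ?thesis unfolding reroutable_def using outside inside end_eq
    by (intro exI[of _ \<gamma>'] exI[of _ "n - s + 1"]) (auto simp: numeral_2_eq_2)
qed

text \<open>\<open>d\<close> is the dimension, \<open>2 * d * n powr \<theta>\<close> bounds the extra length of a detour step caused
  by rounding to points of \<open>\<omega>\<close>, \<open>n powr \<theta>\<close> is the saving demanded per step, and \<open>Q\<close> is the
  energy threshold of the halving step.\<close>

locale rerouting_scales =
  fixes d \<alpha> \<zeta> \<theta> g c0 Q :: real and n :: nat
  assumes alpha: "\<alpha> > 1" and g: "0 \<le> g" "g < 1" and c0: "c0 > 0"
    and gap: "\<And>t. t \<in> {0..g} \<Longrightarrow> c0 \<le> powr_midpoint_gap \<alpha> t"
    and theta: "\<theta> > 0" and n: "n \<ge> 1" and d: "d \<ge> 0"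
    and e_le: "2 * d * real n powr \<theta> \<le> Q powr (1 / \<alpha>)"
    and e_small: "2 * d * real n powr \<theta> * \<alpha> * 2 powr \<alpha> \<le> c0 * Q powr (1 / \<alpha>)"
    and tau_small: "2 * real n powr \<theta> < c0 * Q"
    and Q_large: "2 * (2 * d * real n powr \<theta>) powr \<alpha> + 4 * real n powr \<theta> \<le> Q"
    and Q_dyadic: "\<And>j. 2 ^ j \<le> n \<Longrightarrow> Q \<le> real n powr (\<zeta> * \<alpha>) / 2 * ((1 + g powr \<alpha>) / 2) ^ j"
begin

lemma dichotomy:
  fixes \<gamma> :: "nat \<Rightarrow> real^'d" and \<omega> :: "(nat \<times> (real^'d)) set"
  assumes d_eq: "d = real CARD('d)" and s: "s \<in> {1..n}" and \<omega>: "theta_property \<theta> n \<omega>"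
  shows "(Delta \<gamma> s \<le> real n powr \<zeta> \<and> (s + 1 \<le> n \<longrightarrow> Delta \<gamma> (s + 1) \<le> real n powr \<zeta>))
    \<or> reroutable \<alpha> \<theta> n s \<gamma> \<omega>"
proof (rule disjCI)
  assume not_reroutable: "\<not> reroutable \<alpha> \<theta> n s \<gamma> \<omega>"
  define x where "x j = Delta \<gamma> (s + j)" for j
  define K where "K = n - s + 1"
  define e where "e = 2 * d * real n powr \<theta>"
  have one: "1 \<le> real n powr \<theta>" using n theta by (simp add: ge_one_powr_ge_zero)
  have "0 < Q" using Q_large one powr_ge_zero[of "2 * d * real n powr \<theta>" \<alpha>] by linarith
  moreover have "(\<Sum>j<W. x j powr \<alpha>) < W * ((\<Sum>j<W. x j) / W + e) powr \<alpha> + W * real n powr \<theta>"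
    if W: "2 \<le> W" "W \<le> K" for W
  proof (rule ccontr)
    assume "\<not> ?thesis"
    moreover have "s + W - 1 \<le> n" using W s by (simp add: K_def)
    ultimately have "reroutable \<alpha> \<theta> n s \<gamma> \<omega>"
      using s alpha by (intro straight_detour[OF \<omega> one _ _ W(1)]) (auto simp: x_def e_def d_eq)
    then show False using not_reroutable by blast
  qed
  moreover have "(\<Sum>j<K. x j powr \<alpha>) < K * e powr \<alpha> + (K + 1) * real n powr \<theta>"
  proof (rule ccontr)
    assume "\<not> ?thesis"
    then have "reroutable \<alpha> \<theta> n s \<gamma> \<omega>"
      using s alpha by (intro stalled_detour[OF \<omega> one]) (auto simp: x_def e_def d_eq K_def)
    then show False using not_reroutable by blast
  qed
  moreover have "Q \<le> (real n powr \<zeta>) powr \<alpha> / 2 * ((1 + g powr \<alpha>) / 2) ^ j" if "2 ^ j \<le> K" for j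
  proof -
    have "K \<le> n" using s unfolding K_def by auto
    then have "2 ^ j \<le> n" using that by linarith
    then show ?thesis using Q_dyadic[of j] by (simp add: powr_powr)
  qed
  ultimately have "x 0 \<le> real n powr \<zeta> \<and> (2 \<le> K \<longrightarrow> x 1 \<le> real n powr \<zeta>)"
    using alpha g c0 gap e_le e_small tau_small Q_large d theta
    by (intro first_steps_bounded[where x = x and Q = Q and e = e and \<tau> = "real n powr \<theta>"])
      (auto simp: x_def e_def K_def Delta_def l1norm_nonneg)
  then show "Delta \<gamma> s \<le> real n powr \<zeta> \<and> (s + 1 \<le> n \<longrightarrow> Delta \<gamma> (s + 1) \<le> real n powr \<zeta>)"
    using s by (auto simp: x_def K_def)
qed

end

lemma eventually_powr_ge:
  assumes "\<delta> > 0"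
  shows "eventually (\<lambda>n. M \<le> real n powr \<delta>) sequentially"
proof (rule eventually_sequentiallyI)
  fix n :: nat
  assume "nat \<lceil>max M 1 powr (1 / \<delta>)\<rceil> \<le> n"
  then have "max M 1 powr (1 / \<delta>) \<le> real n" by linarith
  then have "(max M 1 powr (1 / \<delta>)) powr \<delta> \<le> real n powr \<delta>"
    using assms by (intro powr_mono2) auto
  then show "M \<le> real n powr \<delta>" using assms by (simp add: powr_powr)
qed

lemma eventually_powr_le_powr:
  assumes "p < q" "C' > 0"
  shows "eventually (\<lambda>n. C * real n powr p \<le> C' * real n powr q) sequentially"
proof -
  have "eventually (\<lambda>n. \<bar>C\<bar> / C' \<le> real n powr (q - p)) sequentially"
    using assms by (intro eventually_powr_ge) auto
  with eventually_ge_at_top[of 1] show ?thesis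
  proof eventually_elim
  case (elim n)
  have "C * real n powr p \<le> \<bar>C\<bar> * real n powr p" by (simp add: mult_right_mono)
  also have "\<dots> \<le> (C' * real n powr (q - p)) * real n powr p"
    using elim assms by (intro mult_right_mono) (auto simp: divide_le_eq mult.commute)
  also have "\<dots> = C' * real n powr q" using elim by (simp add: powr_diff)
  finally show ?case .
  qed
qed

lemma dyadic_powr_decay:
  fixes r :: real and n j :: nat
  assumes "r \<ge> 0" "2 ^ j \<le> n"
  shows "real n powr (- r) \<le> (2 powr (- r)) ^ j"
proof -
  have "real n powr (- r) \<le> real (2 ^ j) powr (- r)"
    using assms by (intro powr_mono2') auto
  also have "\<dots> = (2 powr (- r)) ^ j"
    by (simp add: powr_realpow[symmetric] powr_powr powr_power mult.commute)
  finally show ?thesis .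
qed

lemma rerouting_scales_of_bounds:
  fixes d \<alpha> \<zeta> \<theta> g c0 r :: real and n :: nat
  assumes \<alpha>: "\<alpha> > 1" and g: "0 \<le> g" "g < 1" and c0: "c0 > 0"
    and gap: "\<And>t. t \<in> {0..g} \<Longrightarrow> c0 \<le> powr_midpoint_gap \<alpha> t"
    and \<theta>: "\<theta> > 0" and n: "n \<ge> 1" and d: "d \<ge> 0" and r: "r \<ge> 0"
    and level: "(1 + g powr \<alpha>) / 2 = 2 powr (- r)"
    and b1: "2 * d * real n powr \<theta> \<le> 2 powr (- 1 / \<alpha>) * real n powr ((\<zeta> * \<alpha> - r) / \<alpha>)"
    and b2: "2 * d * \<alpha> * 2 powr \<alpha> * real n powr \<theta> \<le> c0 * 2 powr (- 1 / \<alpha>) * real n powr ((\<zeta> * \<alpha> - r) / \<alpha>)"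
    and b3: "8 * real n powr \<theta> \<le> c0 * real n powr (\<zeta> * \<alpha> - r)"
    and b4: "8 * (2 * d) powr \<alpha> * real n powr (\<theta> * \<alpha>) \<le> real n powr (\<zeta> * \<alpha> - r)"
    and b5: "16 * real n powr \<theta> \<le> real n powr (\<zeta> * \<alpha> - r)"
  shows "rerouting_scales d \<alpha> \<zeta> \<theta> g c0 (real n powr (\<zeta> * \<alpha> - r) / 2) n"
proof -
  define N where "N = real n powr (\<zeta> * \<alpha> - r)"
  have root: "(N / 2) powr (1 / \<alpha>) = 2 powr (- 1 / \<alpha>) * real n powr ((\<zeta> * \<alpha> - r) / \<alpha>)"
    using \<alpha> by (simp add: N_def powr_divide powr_powr powr_minus_divide)
  have e_powr: "(2 * d * real n powr \<theta>) powr \<alpha> = (2 * d) powr \<alpha> * real n powr (\<theta> * \<alpha>)"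
    using d by (simp add: powr_mult powr_powr)
  have "0 < real n powr \<theta>" using n by simp
  show ?thesis unfolding N_def[symmetric]
  proof (rule rerouting_scales.intro)
    show "2 * d * real n powr \<theta> \<le> (N / 2) powr (1 / \<alpha>)" using b1 root by simp
    have "2 * d * real n powr \<theta> * \<alpha> * 2 powr \<alpha> = 2 * d * \<alpha> * 2 powr \<alpha> * real n powr \<theta>"
      by (simp only: mult_ac)
    then show "2 * d * real n powr \<theta> * \<alpha> * 2 powr \<alpha> \<le> c0 * (N / 2) powr (1 / \<alpha>)"
      using b2 unfolding root by (simp only: mult.assoc)
    show "2 * real n powr \<theta> < c0 * (N / 2)"
      using b3 \<open>0 < real n powr \<theta>\<close> unfolding N_def by linarith
    show "2 * (2 * d * real n powr \<theta>) powr \<alpha> + 4 * real n powr \<theta> \<le> N / 2"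
      using b4 b5 unfolding e_powr N_def by linarith
    show "N / 2 \<le> real n powr (\<zeta> * \<alpha>) / 2 * ((1 + g powr \<alpha>) / 2) ^ j" if "2 ^ j \<le> n" for j
    proof -
      have "N / 2 = real n powr (\<zeta> * \<alpha>) / 2 * real n powr (- r)"
        using powr_add[of "real n" "\<zeta> * \<alpha>" "- r"] by (simp add: N_def)
      also have "\<dots> \<le> real n powr (\<zeta> * \<alpha>) / 2 * ((1 + g powr \<alpha>) / 2) ^ j"
        unfolding level using dyadic_powr_decay[OF r that] by (intro mult_left_mono) auto
      finally show ?thesis .
    qed
  qed (use \<alpha> g c0 gap \<theta> n d in blast)+
qed

lemma rerouting_scales_eventually:
  fixes \<alpha> \<zeta> d :: real
  assumes \<alpha>: "\<alpha> > 1" and \<zeta>: "\<zeta> > 0" and d: "d \<ge> 0"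
  obtains \<theta> g c0 r where "\<theta> > 0"
    and "eventually (\<lambda>n. rerouting_scales d \<alpha> \<zeta> \<theta> g c0 (real n powr (\<zeta> * \<alpha> - r) / 2) n) sequentially"
proof -
  define r where "r = min (\<zeta> * \<alpha> / 4) (1 / 2)"
  define g where "g = (2 * 2 powr (- r) - 1) powr (1 / \<alpha>)"
  define \<theta> where "\<theta> = \<zeta> / 4"
  define ex where "ex = \<zeta> * \<alpha> - r"
  have r: "r > 0" "r \<le> 1 / 2" "r \<le> \<zeta> * \<alpha> / 4" using \<zeta> \<alpha> by (auto simp: r_def)
  have "2 powr (- 1) < 2 powr (- r)" using r by (intro powr_less_mono) auto
  moreover have "2 powr (- r) < (1::real)" using r by (intro powr_less_one) auto
  ultimately
  have level_pos: "0 < 2 * 2 powr (- r) - 1" "2 * 2 powr (- r) - 1 < (1::real)"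
    by auto
  have g: "0 \<le> g" "g < 1" "(1 + g powr \<alpha>) / 2 = 2 powr (- r)"
    using level_pos \<alpha> powr_less_mono2[of "1 / \<alpha>" _ 1] by (auto simp: g_def powr_powr)
  obtain c0 where c0: "c0 > 0" "\<And>t. t \<in> {0..g} \<Longrightarrow> c0 \<le> powr_midpoint_gap \<alpha> t"
    using powr_midpoint_gap_uniform[OF \<alpha> g(1,2)] by blast
  have "\<zeta> * 1 < \<zeta> * \<alpha>" using \<zeta> \<alpha> by (intro mult_strict_left_mono)
  moreover have "\<theta> * \<alpha> = \<zeta> * \<alpha> / 4" by (simp add: \<theta>_def)
  ultimately have ex: "\<theta> * \<alpha> < ex" "\<theta> < ex"
    using r \<zeta> unfolding ex_def \<theta>_def by linarith+
  then have ex': "\<theta> < ex / \<alpha>" using \<alpha> by (simp add: less_divide_eq)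
  have "eventually (\<lambda>n. 2 * d * real n powr \<theta> \<le> 2 powr (- 1 / \<alpha>) * real n powr (ex / \<alpha>)) sequentially"
    "eventually (\<lambda>n. 2 * d * \<alpha> * 2 powr \<alpha> * real n powr \<theta> \<le> c0 * 2 powr (- 1 / \<alpha>) * real n powr (ex / \<alpha>)) sequentially"
    "eventually (\<lambda>n. 8 * real n powr \<theta> \<le> c0 * real n powr ex) sequentially"
    "eventually (\<lambda>n. 8 * (2 * d) powr \<alpha> * real n powr (\<theta> * \<alpha>) \<le> real n powr ex) sequentially"
    "eventually (\<lambda>n. 16 * real n powr \<theta> \<le> real n powr ex) sequentially"
    using ex ex' c0 by (auto intro!: eventually_powr_le_powr eventually_powr_le_powr[where C' = 1, simplified])
  with eventually_ge_at_top[of 1]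
  have "eventually (\<lambda>n. rerouting_scales d \<alpha> \<zeta> \<theta> g c0 (real n powr (\<zeta> * \<alpha> - r) / 2) n) sequentially"
  proof eventually_elim
    case (elim n)
    then show ?case
      using \<alpha> g c0 d r by (intro rerouting_scales_of_bounds) (auto simp: \<theta>_def \<zeta> ex_def)
  qed
  moreover have "\<theta> > 0" using \<zeta> by (simp add: \<theta>_def)
  ultimately show ?thesis using that by blast
qed

theorem lemma1:
  fixes \<alpha> :: real
  assumes "\<alpha> > 1"
  shows "\<forall>\<zeta>>0. \<exists>\<theta>>0. \<exists>N::nat. \<forall>n>N. \<forall>s\<in>{1..n}. \<forall>(\<gamma>::nat \<Rightarrow> real^'d). \<forall>\<omega>'.
     theta_property \<theta> n \<omega>' \<longrightarrow>
     ((Delta \<gamma> s \<le> real n powr \<zeta> \<and> (s + 1 \<le> n \<longrightarrow> Delta \<gamma> (s + 1) \<le> real n powr \<zeta>))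
      \<or> (\<exists>\<gamma>'::nat \<Rightarrow> real^'d. \<exists>k::nat. k > 0 \<and> s + k - 1 \<le> n \<and>
           (\<forall>i\<in>{1..n}. (i < s \<or> i > s + k - 1) \<longrightarrow> \<gamma> i = \<gamma>' i) \<and>
           (\<forall>i\<in>{s..s + k - 1}. (i, \<gamma>' i) \<in> \<omega>') \<and>
           passage_time \<alpha> n \<gamma>' + real (k + 1) * real n powr \<theta> \<le> passage_time \<alpha> n \<gamma>))"
proof -
  have "\<exists>\<theta>>0. \<exists>N::nat. \<forall>n>N. \<forall>s\<in>{1..n}. \<forall>(\<gamma>::nat \<Rightarrow> real^'d) \<omega>'. theta_property \<theta> n \<omega>' \<longrightarrow>
      (Delta \<gamma> s \<le> real n powr \<zeta> \<and> (s + 1 \<le> n \<longrightarrow> Delta \<gamma> (s + 1) \<le> real n powr \<zeta>))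
      \<or> reroutable \<alpha> \<theta> n s \<gamma> \<omega>'" if "\<zeta> > 0" for \<zeta>
  proof -
    obtain \<theta> g c0 r where "\<theta> > 0" and "eventually (\<lambda>n.
        rerouting_scales (real CARD('d)) \<alpha> \<zeta> \<theta> g c0 (real n powr (\<zeta> * \<alpha> - r) / 2) n) sequentially"
      by (rule rerouting_scales_eventually[OF assms \<open>\<zeta> > 0\<close>, of "real CARD('d)"]) auto
    then obtain N where N: "\<And>n. N \<le> n \<Longrightarrow>
        rerouting_scales (real CARD('d)) \<alpha> \<zeta> \<theta> g c0 (real n powr (\<zeta> * \<alpha> - r) / 2) n"
      unfolding eventually_sequentially by blast
    show ?thesis
    proof (intro exI[of _ \<theta>] exI[of _ N] conjI allI impI ballI \<open>\<theta> > 0\<close>)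
      fix n s and \<gamma> :: "nat \<Rightarrow> real^'d" and \<omega>' :: "(nat \<times> (real^'d)) set"
      assume "N < n" "s \<in> {1..n}" "theta_property \<theta> n \<omega>'"
      then show "(Delta \<gamma> s \<le> real n powr \<zeta> \<and> (s + 1 \<le> n \<longrightarrow> Delta \<gamma> (s + 1) \<le> real n powr \<zeta>))
          \<or> reroutable \<alpha> \<theta> n s \<gamma> \<omega>'"
        by (intro rerouting_scales.dichotomy[OF N refl]) auto
    qed
  qed
  then show ?thesis unfolding reroutable_def by blast
qed

end
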